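(* For each $n$, consider the distributed system (under the RJSQ policy) and its minimum-delay service pool (MDSP), as described in the context, both initially empty. Then the process \[ \Gamma^\dagger_n(t)=\big(W_n(t)+U_n(t)\big)-\big(W^\dagger_n(t)+U^\dagger_n(t)\big),\quad t\ge0, \] has continuous, piecewise linear sample paths, and $\Gamma^\dagger_n(t)\ge0$ for all $t\ge0$.
   Context: Distributed system $n$: $s\ge2$ stations with single work-conserving FCFS servers, unlimited waiting room, service rates $0<\mu_1\le\cdots\le\mu_s$, $\mu=\sum_k\mu_k$. Customer $j$ appears at time $a_n(j)=\sum_{i\le j}z(i)/\lambda_n$ ($z(i)$ i.i.d. nonnegative, mean 1); it comes from origin $m\in\{1,\ldots,b\}$ with probability $p_m>0$ (i.i.d. across customers), in which case its traveling delay to station $k$ is $\sqrt n d_{m,k}$, $d_{m,k}\ge0$. It is routed by the randomized join-the-shortest-queue (RJSQ) policy to a destination $\xi_n(j)$ and arrives there at time $a_n(j)+\sqrt n d_{m,\xi_n(j)}$. The $i$th customer arriving at (served by) station $k$ has service requirement $w_k(i)$ (i.i.d. nonnegative, mean 1) and service time $w_k(i)/\mu_k$. $W_n(t)=\sum_kW_{n,k}(t)$, where $W_{n,k}(t)$ is the total unfinished service requirement (remaining service time times $\mu_k$) of customers present at station $k$; $U_n(t)$ (en route workload) is the total service requirement of customers that have appeared by time $t$ but not yet arrived at their stations. MDSP $n$: a single station with one work-conserving FCFS server of rate $\mu$ and unlimited waiting room. For each customer $j$ of distributed system $n$, from origin $m$ and sent to station $k$, there is a class-$k$ counterpart that appears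 at $a_n(j)$, arrives at the MDSP station at time $a_n(j)+\sqrt n\,\underline d_m$ with $\underline d_m=\min_\ell d_{m,\ell}$, and has the same service requirement (service time requirement$/\mu$). $W^\dagger_n(t)$ is the total unfinished service requirement at the MDSP station and $U^\dagger_n(t)$ the total service requirement of counterparts that have appeared but not yet arrived. *)

theory Defs
  imports "HOL-Analysis.Analysis"
begin

text \<open>Pathwise (sample-path) model. Customers are indexed by j \<ge> 1.\<close>

definition appear :: "real \<Rightarrow> (nat \<Rightarrow> real) \<Rightarrow> nat \<Rightarrow> real" where
  "appear lam z j = (\<Sum>i\<in>{1..j}. z i) / lam"

definition dmin :: "nat \<Rightarrow> (nat \<Rightarrow> nat \<Rightarrow> real) \<Rightarrow> nat \<Rightarrow> real" where
  "dmin s d m = Min ((\<lambda>l. d m l) ` {1..s})"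

definition dist_arr :: "nat \<Rightarrow> real \<Rightarrow> (nat \<Rightarrow> real) \<Rightarrow> (nat \<Rightarrow> nat \<Rightarrow> real)
    \<Rightarrow> (nat \<Rightarrow> nat) \<Rightarrow> (nat \<Rightarrow> nat) \<Rightarrow> nat \<Rightarrow> real" where
  "dist_arr n lam z d orig xi j = appear lam z j + sqrt (real n) * d (orig j) (xi j)"

definition mdsp_arr :: "nat \<Rightarrow> nat \<Rightarrow> real \<Rightarrow> (nat \<Rightarrow> real) \<Rightarrow> (nat \<Rightarrow> nat \<Rightarrow> real)
    \<Rightarrow> (nat \<Rightarrow> nat) \<Rightarrow> nat \<Rightarrow> real" where
  "mdsp_arr n s lam z d orig j = appear lam z j + sqrt (real n) * dmin s d (orig j)"

text \<open>Unfinished service requirement at time t \<ge> 0 of a single work-conserving server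
  working at rate r, initially empty, fed by the customers j \<ge> 1 with sel j, customer j
  arriving at time arr j with service requirement v j (Lindley / Skorokhod representation
  of the workload of a work-conserving server).\<close>
definition workload :: "real \<Rightarrow> (nat \<Rightarrow> bool) \<Rightarrow> (nat \<Rightarrow> real) \<Rightarrow> (nat \<Rightarrow> real) \<Rightarrow> real \<Rightarrow> real" where
  "workload r sel arr v t =
     (SUP u\<in>{0..t}. (\<Sum>j\<in>{j. 1 \<le> j \<and> sel j \<and> u \<le> arr j \<and> arr j \<le> t}. v j) - r * (t - u))"

definition enroute :: "(nat \<Rightarrow> real) \<Rightarrow> (nat \<Rightarrow> real) \<Rightarrow> (nat \<Rightarrow> real) \<Rightarrow> real \<Rightarrow> real" where
  "enroute a arr v t = (\<Sum>j\<in>{j. 1 \<le> j \<and> a j \<le> t \<and> t < arr j}. v j)"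

definition W_dist :: "nat \<Rightarrow> nat \<Rightarrow> real \<Rightarrow> (nat \<Rightarrow> real) \<Rightarrow> (nat \<Rightarrow> real)
    \<Rightarrow> (nat \<Rightarrow> nat \<Rightarrow> real) \<Rightarrow> (nat \<Rightarrow> nat) \<Rightarrow> (nat \<Rightarrow> nat) \<Rightarrow> (nat \<Rightarrow> real) \<Rightarrow> real \<Rightarrow> real" where
  "W_dist n s lam mu z d orig xi v t =
     (\<Sum>k\<in>{1..s}. workload (mu k) (\<lambda>j. xi j = k) (dist_arr n lam z d orig xi) v t)"

definition U_dist :: "nat \<Rightarrow> real \<Rightarrow> (nat \<Rightarrow> real) \<Rightarrow> (nat \<Rightarrow> nat \<Rightarrow> real)
    \<Rightarrow> (nat \<Rightarrow> nat) \<Rightarrow> (nat \<Rightarrow> nat) \<Rightarrow> (nat \<Rightarrow> real) \<Rightarrow> real \<Rightarrow> real" where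
  "U_dist n lam z d orig xi v t = enroute (appear lam z) (dist_arr n lam z d orig xi) v t"

definition W_mdsp :: "nat \<Rightarrow> nat \<Rightarrow> real \<Rightarrow> (nat \<Rightarrow> real) \<Rightarrow> (nat \<Rightarrow> real)
    \<Rightarrow> (nat \<Rightarrow> nat \<Rightarrow> real) \<Rightarrow> (nat \<Rightarrow> nat) \<Rightarrow> (nat \<Rightarrow> real) \<Rightarrow> real \<Rightarrow> real" where
  "W_mdsp n s lam mu z d orig v t =
     workload (\<Sum>k\<in>{1..s}. mu k) (\<lambda>j. True) (mdsp_arr n s lam z d orig) v t"

definition U_mdsp :: "nat \<Rightarrow> nat \<Rightarrow> real \<Rightarrow> (nat \<Rightarrow> real) \<Rightarrow> (nat \<Rightarrow> nat \<Rightarrow> real)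
    \<Rightarrow> (nat \<Rightarrow> nat) \<Rightarrow> (nat \<Rightarrow> real) \<Rightarrow> real \<Rightarrow> real" where
  "U_mdsp n s lam z d orig v t = enroute (appear lam z) (mdsp_arr n s lam z d orig) v t"

definition Gamma :: "nat \<Rightarrow> nat \<Rightarrow> real \<Rightarrow> (nat \<Rightarrow> real) \<Rightarrow> (nat \<Rightarrow> real)
    \<Rightarrow> (nat \<Rightarrow> nat \<Rightarrow> real) \<Rightarrow> (nat \<Rightarrow> nat) \<Rightarrow> (nat \<Rightarrow> nat) \<Rightarrow> (nat \<Rightarrow> real) \<Rightarrow> real \<Rightarrow> real" where
  "Gamma n s lam mu z d orig xi v t =
     (W_dist n s lam mu z d orig xi v t + U_dist n lam z d orig xi v t)
     - (W_mdsp n s lam mu z d orig v t + U_mdsp n s lam z d orig v t)"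

definition piecewise_linear_nonneg :: "(real \<Rightarrow> real) \<Rightarrow> bool" where
  "piecewise_linear_nonneg f \<longleftrightarrow>
     (\<forall>T>0. \<exists>ts::real list. ts \<noteq> [] \<and> sorted_wrt (<) ts \<and> hd ts = 0 \<and> last ts = T \<and>
        (\<forall>i < length ts - 1. \<exists>\<alpha> \<beta>. \<forall>x\<in>{ts ! i .. ts ! Suc i}. f x = \<alpha> * x + \<beta>))"

end

theory Submission
  imports Defs
begin

text \<open>A work-conserving server of rate r has workload \<open>W t = A t - r * t + K t\<close>, where A t is
  the work arrived by time t and \<open>K t = (SUP u\<in>{0..t}. r * u - (work arrived before u))\<close>
  is the regulator. The en-route work is the appeared work minus A, so in \<open>W + U\<close> the
  arrival processes cancel and \<open>\<Gamma> = (\<Sum>k. K\<^sub>k) - K\<^sup>\<dagger>\<close>. Each regulator is r-Lipschitz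
  and, between arrival epochs, the maximum of a constant and an affine function; this gives
  continuity and piecewise linearity. Since every counterpart reaches the pool no later than
  its customer reaches its station, the pool has received at least as much work before any
  time u as all stations together, whence \<open>K\<^sup>\<dagger> \<le> (\<Sum>k. K\<^sub>k)\<close>. Neither the routing policy
  nor the ordering of the service rates plays a role.\<close>

definition locally_affine_at :: "(real \<Rightarrow> real) \<Rightarrow> real \<Rightarrow> bool" where
  "locally_affine_at f t \<longleftrightarrow> (\<exists>\<alpha> \<beta>. \<forall>\<^sub>F x in nhds t. f x = \<alpha> * x + \<beta>)"

lemma locally_affine_at_cong:
  assumes "\<forall>\<^sub>F x in nhds t. f x = g x" and "locally_affine_at g t"
  shows "locally_affine_at f t"
proof -
  obtain \<alpha> \<beta> where "\<forall>\<^sub>F x in nhds t. g x = \<alpha> * x + \<beta>"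
    using assms(2) unfolding locally_affine_at_def by blast
  with assms(1) have "\<forall>\<^sub>F x in nhds t. f x = \<alpha> * x + \<beta>"
    by eventually_elim simp
  then show ?thesis unfolding locally_affine_at_def by blast
qed

lemma locally_affine_at_diff:
  assumes "locally_affine_at f t" and "locally_affine_at g t"
  shows "locally_affine_at (\<lambda>x. f x - g x) t"
proof -
  obtain \<alpha> \<beta> \<gamma> \<delta> where "\<forall>\<^sub>F x in nhds t. f x = \<alpha> * x + \<beta>" "\<forall>\<^sub>F x in nhds t. g x = \<gamma> * x + \<delta>"
    using assms unfolding locally_affine_at_def by blast
  then have "\<forall>\<^sub>F x in nhds t. f x - g x = (\<alpha> - \<gamma>) * x + (\<beta> - \<delta>)"
    by eventually_elim (simp add: algebra_simps)
  then show ?thesis unfolding locally_affine_at_def by blast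
qed

lemma locally_affine_at_sum:
  assumes "finite I" and "\<And>k. k \<in> I \<Longrightarrow> locally_affine_at (f k) t"
  shows "locally_affine_at (\<lambda>x. \<Sum>k\<in>I. f k x) t"
proof -
  obtain \<alpha> \<beta> where "\<forall>k\<in>I. \<forall>\<^sub>F x in nhds t. f k x = \<alpha> k * x + \<beta> k"
    using assms(2) unfolding locally_affine_at_def by metis
  then have "\<forall>\<^sub>F x in nhds t. \<forall>k\<in>I. f k x = \<alpha> k * x + \<beta> k"
    using assms(1) by (rule eventually_ball_finite[rotated])
  then have "\<forall>\<^sub>F x in nhds t. (\<Sum>k\<in>I. f k x) = (\<Sum>k\<in>I. \<alpha> k) * x + (\<Sum>k\<in>I. \<beta> k)"
    by eventually_elim (simp add: sum.distrib sum_distrib_right)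
  then show ?thesis unfolding locally_affine_at_def by blast
qed

lemma locally_affine_at_max:
  assumes "a * t + b \<noteq> c * t + e"
  shows "locally_affine_at (\<lambda>x. max (a * x + b) (c * x + e)) t"
proof (cases "a * t + b < c * t + e")
  case True
  have "\<forall>\<^sub>F x in nhds t. x \<in> {x. a * x + b < c * x + e}"
    using True by (intro eventually_nhds_in_open open_Collect_less) (auto intro: continuous_intros)
  then have "\<forall>\<^sub>F x in nhds t. max (a * x + b) (c * x + e) = c * x + e"
    by eventually_elim auto
  then show ?thesis unfolding locally_affine_at_def by blast
next
  case False
  then have "c * t + e < a * t + b" using assms by linarith
  then have "\<forall>\<^sub>F x in nhds t. x \<in> {x. c * x + e < a * x + b}"
    by (intro eventually_nhds_in_open open_Collect_less) (auto intro: continuous_intros)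
  then have "\<forall>\<^sub>F x in nhds t. max (a * x + b) (c * x + e) = a * x + b"
    by eventually_elim auto
  then show ?thesis unfolding locally_affine_at_def by blast
qed

lemma locally_affine_at_DERIV:
  assumes "locally_affine_at f t"
  shows "\<forall>\<^sub>F x in nhds t. (f has_real_derivative deriv f t) (at x)"
proof -
  obtain \<alpha> \<beta> where "\<forall>\<^sub>F x in nhds t. f x = \<alpha> * x + \<beta>"
    using assms unfolding locally_affine_at_def by blast
  then have "\<forall>\<^sub>F x in nhds t. \<forall>\<^sub>F y in nhds x. f y = \<alpha> * y + \<beta>"
    by (simp add: eventually_eventually)
  moreover have "((\<lambda>y. \<alpha> * y + \<beta>) has_real_derivative \<alpha>) (at x)" for x
    by (auto intro!: derivative_eq_intros)
  ultimately have ev: "\<forall>\<^sub>F x in nhds t. (f has_real_derivative \<alpha>) (at x)"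
    by (auto elim: eventually_mono simp: DERIV_cong_ev)
  then have "deriv f t = \<alpha>"
    using eventually_nhds_x_imp_x DERIV_imp_deriv by blast
  then show ?thesis using ev by simp
qed

lemma affine_on_interval:
  fixes f :: "real \<Rightarrow> real"
  assumes "x < y" and cont: "continuous_on {x..y} f"
    and affine: "\<And>t. t \<in> {x<..<y} \<Longrightarrow> locally_affine_at f t"
  obtains \<alpha> \<beta> where "\<And>t. t \<in> {x..y} \<Longrightarrow> f t = \<alpha> * t + \<beta>"
proof -
  define m where "m = (x + y) / 2"
  have m: "m \<in> {x<..<y}" unfolding m_def using \<open>x < y\<close> by auto
  have slope_const: "deriv f t = deriv f m" if t: "t \<in> {x<..<y}" for t
  proof (rule connected_local_const[of "{x<..<y}" t m "deriv f"])
    show "\<forall>a\<in>{x<..<y}. \<forall>\<^sub>F b in at a within {x<..<y}. deriv f a = deriv f b"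
    proof
      fix a assume "a \<in> {x<..<y}"
      then have "\<forall>\<^sub>F b in nhds a. (f has_real_derivative deriv f a) (at b)"
        using affine by (intro locally_affine_at_DERIV) auto
      then have "\<forall>\<^sub>F b in nhds a. deriv f a = deriv f b"
        by eventually_elim (simp add: DERIV_imp_deriv)
      then show "\<forall>\<^sub>F b in at a within {x<..<y}. deriv f a = deriv f b"
        unfolding eventually_at_filter by (auto elim: eventually_mono)
    qed
  qed (use t m in auto)
  have "((\<lambda>t. f t - deriv f m * t) has_real_derivative 0) (at t)" if "x < t" "t < y" for t
  proof -
    have "(f has_real_derivative deriv f m) (at t)"
      using eventually_nhds_x_imp_x[OF locally_affine_at_DERIV[OF affine]] slope_const that by auto
    then show ?thesis by (auto intro!: derivative_eq_intros)
  qed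
  then have "f t - deriv f m * t = f x - deriv f m * x" if "t \<in> {x..y}" for t
    using that \<open>x < y\<close> by (intro DERIV_isconst2[of x y]) (auto intro!: continuous_intros cont)
  then show ?thesis
    by (intro that[of "deriv f m" "f x - deriv f m * x"]) (simp add: algebra_simps)
qed

lemma sorted_list_of_set_between:
  fixes A :: "'a::linorder set"
  assumes "finite A" "a \<in> A" "b \<in> A" "A \<subseteq> {a..b}"
  obtains ts where "sorted_wrt (<) ts" "set ts = A" "hd ts = a" "last ts = b"
proof
  let ?ts = "sorted_list_of_set A"
  show sorted: "sorted_wrt (<) ?ts" and set: "set ?ts = A"
    using assms(1) by (simp_all add: strict_sorted_list_of_set)
  have "Min A = a" using assms by (intro Min_eqI) auto
  then show "hd ?ts = a" using assms(1,2) by (subst sorted_list_of_set_nonempty) auto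
  have ne: "?ts \<noteq> []" using set assms(2) by auto
  obtain k where k: "k < length ?ts" "?ts ! k = b"
    using set assms(3) by (metis in_set_conv_nth)
  have "b \<le> last ?ts"
    using k sorted_nth_mono[OF strict_sorted_imp_sorted[OF sorted], of k "length ?ts - 1"] ne
    by (simp add: last_conv_nth)
  moreover have "last ?ts \<le> b" using last_in_set[OF ne] set assms(4) by auto
  ultimately show "last ?ts = b" by simp
qed

lemma sorted_wrt_less_nth_gap:
  fixes ts :: "'a::linorder list"
  assumes "sorted_wrt (<) ts" "Suc i < length ts" "x \<in> set ts"
  shows "x \<le> ts ! i \<or> ts ! Suc i \<le> x"
proof -
  obtain k where k: "k < length ts" "ts ! k = x" using assms(3) by (metis in_set_conv_nth)
  show ?thesis
    using sorted_nth_mono[OF strict_sorted_imp_sorted[OF assms(1)], of k i]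
      sorted_nth_mono[OF strict_sorted_imp_sorted[OF assms(1)], of "Suc i" k] k assms(2)
    by (cases "k \<le> i") auto
qed

lemma piecewise_linear_nonnegI:
  assumes cont: "continuous_on {0..} f"
    and kinks: "\<And>T. finite {t \<in> {0<..<T}. \<not> locally_affine_at f t}"
  shows "piecewise_linear_nonneg f"
  unfolding piecewise_linear_nonneg_def
proof (intro allI impI)
  fix T :: real assume "T > 0"
  define A where "A = insert 0 (insert T {t \<in> {0<..<T}. \<not> locally_affine_at f t})"
  have "finite A" "A \<subseteq> {0..T}" unfolding A_def using kinks \<open>T > 0\<close> by auto
  then obtain ts where ts: "sorted_wrt (<) ts" "set ts = A" "hd ts = 0" "last ts = T"
    using sorted_list_of_set_between[of A 0 T] unfolding A_def by blast
  have "\<exists>\<alpha> \<beta>. \<forall>x\<in>{ts ! i .. ts ! Suc i}. f x = \<alpha> * x + \<beta>" if i: "i < length ts - 1" for i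
  proof -
    have ends: "ts ! i \<in> A" "ts ! Suc i \<in> A" "ts ! i < ts ! Suc i"
      using i ts(1,2) nth_mem[of i ts] nth_mem[of "Suc i" ts] sorted_wrt_nth_less[OF ts(1), of i "Suc i"]
      by auto
    then have range: "0 \<le> ts ! i" "ts ! Suc i \<le> T"
      unfolding A_def using \<open>T > 0\<close> by auto
    have "locally_affine_at f t" if t: "t \<in> {ts ! i <..< ts ! Suc i}" for t
      using sorted_wrt_less_nth_gap[OF ts(1), of i t] i t range ts(2) unfolding A_def by force
    moreover have "continuous_on {ts ! i .. ts ! Suc i} f"
      using range by (auto intro: continuous_on_subset[OF cont])
    ultimately show ?thesis using affine_on_interval[OF ends(3)] by metis
  qed
  then show "\<exists>ts::real list. ts \<noteq> [] \<and> sorted_wrt (<) ts \<and> hd ts = 0 \<and> last ts = T \<and>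
      (\<forall>i < length ts - 1. \<exists>\<alpha> \<beta>. \<forall>x\<in>{ts ! i .. ts ! Suc i}. f x = \<alpha> * x + \<beta>)"
    using ts by (intro exI[of _ ts]) (auto simp: A_def)
qed

definition arrived_before :: "(nat \<Rightarrow> bool) \<Rightarrow> (nat \<Rightarrow> real) \<Rightarrow> (nat \<Rightarrow> real) \<Rightarrow> real \<Rightarrow> real" where
  "arrived_before sel arr v u = (\<Sum>j\<in>{j. 1 \<le> j \<and> sel j \<and> arr j < u}. v j)"

definition arrived :: "(nat \<Rightarrow> bool) \<Rightarrow> (nat \<Rightarrow> real) \<Rightarrow> (nat \<Rightarrow> real) \<Rightarrow> real \<Rightarrow> real" where
  "arrived sel arr v t = (\<Sum>j\<in>{j. 1 \<le> j \<and> sel j \<and> arr j \<le> t}. v j)"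

text \<open>The regulator is r times the cumulative idle time of the server up to t.\<close>
definition regulator :: "real \<Rightarrow> (nat \<Rightarrow> bool) \<Rightarrow> (nat \<Rightarrow> real) \<Rightarrow> (nat \<Rightarrow> real) \<Rightarrow> real \<Rightarrow> real" where
  "regulator r sel arr v t = (SUP u\<in>{0..t}. r * u - arrived_before sel arr v u)"

lemma enroute_eq_diff:
  assumes "\<And>j. 1 \<le> j \<Longrightarrow> a j \<le> arr j" and "finite {j. 1 \<le> j \<and> a j \<le> t}"
  shows "enroute a arr v t
    = (\<Sum>j\<in>{j. 1 \<le> j \<and> a j \<le> t}. v j) - arrived (\<lambda>_. True) arr v t"
proof -
  have "{j. 1 \<le> j \<and> a j \<le> t \<and> t < arr j} = {j. 1 \<le> j \<and> a j \<le> t} - {j. 1 \<le> j \<and> arr j \<le> t}"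
    by auto
  moreover have "{j. 1 \<le> j \<and> arr j \<le> t} \<subseteq> {j. 1 \<le> j \<and> a j \<le> t}"
    using assms(1) by (auto intro: order_trans)
  ultimately show ?thesis
    unfolding enroute_def arrived_def by (simp only: sum_diff[OF assms(2)] simp_thms)
qed

lemma sum_split_by_class:
  assumes "finite I" "finite {j. 1 \<le> j \<and> P j}" "\<And>j. 1 \<le> j \<Longrightarrow> xi j \<in> I"
  shows "(\<Sum>k\<in>I. \<Sum>j\<in>{j. 1 \<le> j \<and> xi j = k \<and> P j}. v j) = (\<Sum>j\<in>{j. 1 \<le> j \<and> P j}. v j)"
proof -
  have "{j. 1 \<le> j \<and> xi j = k \<and> P j} = {j \<in> {j. 1 \<le> j \<and> P j}. xi j = k}" for k
    by auto
  then show ?thesis using sum.group[OF assms(2,1), of xi v] assms(3) by auto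
qed

locale arrival_stream =
  fixes r :: real and sel :: "nat \<Rightarrow> bool" and arr v :: "nat \<Rightarrow> real"
  assumes rate_pos: "r > 0" and v_nonneg: "\<And>j. v j \<ge> 0"
    and finite_arrived: "\<And>t. finite {j. 1 \<le> j \<and> sel j \<and> arr j \<le> t}"
begin

abbreviation "F \<equiv> arrived_before sel arr v"
abbreviation "A \<equiv> arrived sel arr v"
abbreviation "K \<equiv> regulator r sel arr v"

lemma finite_arrived_before: "finite {j. 1 \<le> j \<and> sel j \<and> arr j < u}"
  by (rule finite_subset[OF _ finite_arrived[of u]]) auto

lemma arrived_before_nonneg: "F u \<ge> 0"
  unfolding arrived_before_def by (intro sum_nonneg v_nonneg)

lemma arrived_before_mono: "u \<le> u' \<Longrightarrow> F u \<le> F u'"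
  unfolding arrived_before_def by (intro sum_mono2 finite_arrived_before v_nonneg) auto

lemma bdd_above_netput: "bdd_above ((\<lambda>u. r * u - F u) ` {0..t})"
proof (rule bdd_aboveI2)
  fix u assume "u \<in> {0..t}"
  then have "r * u \<le> r * t" using rate_pos by simp
  then show "r * u - F u \<le> r * t" using arrived_before_nonneg[of u] by linarith
qed

lemma regulator_upper: "u \<in> {0..t} \<Longrightarrow> r * u - F u \<le> K t"
  unfolding regulator_def by (rule cSUP_upper[OF _ bdd_above_netput])

lemma regulator_mono:
  assumes "0 \<le> t" "t \<le> t'"
  shows "K t \<le> K t'"
  unfolding regulator_def[of _ _ _ _ t] using assms
  by (intro cSUP_least) (auto intro: regulator_upper)

lemma regulator_increment_le:
  assumes "0 \<le> t" "t \<le> t'"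
  shows "K t' \<le> K t + r * (t' - t)"
  unfolding regulator_def[of _ _ _ _ t']
proof (rule cSUP_least)
  show "{0..t'} \<noteq> {}" using assms by auto
  fix u assume u: "u \<in> {0..t'}"
  show "r * u - F u \<le> K t + r * (t' - t)"
  proof (cases "u \<le> t")
    case True
    moreover have "0 \<le> r * (t' - t)" using rate_pos assms by simp
    ultimately show ?thesis using regulator_upper[of u t] u by simp
  next
    case False
    then have "r * t - F u \<le> K t"
      using regulator_upper[of t t] arrived_before_mono[of t u] assms by simp
    moreover have "r * u \<le> r * t'" using u rate_pos by simp
    ultimately show ?thesis by (simp add: algebra_simps)
  qed
qed

lemma continuous_on_regulator: "continuous_on {0..} K"
proof (rule lipschitz_on_continuous_on)
  show "r-lipschitz_on {0..} K"
  proof (rule lipschitz_onI)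
    have "dist (K t) (K t') \<le> r * dist t t'" if "0 \<le> t" "t \<le> t'" for t t'
      using regulator_mono[OF that] regulator_increment_le[OF that] that by (simp add: dist_real_def)
    then show "dist (K t) (K t') \<le> r * dist t t'" if "t \<in> {0..}" "t' \<in> {0..}" for t t'
      using that by (cases "t \<le> t'") (force simp: dist_commute)+
  qed (use rate_pos in simp)
qed

lemma workload_eq_regulator:
  assumes "t \<ge> 0"
  shows "workload r sel arr v t = A t - r * t + K t"
proof -
  have "(\<Sum>j\<in>{j. 1 \<le> j \<and> sel j \<and> u \<le> arr j \<and> arr j \<le> t}. v j) - r * (t - u)
      = (A t - r * t) + (r * u - F u)" if "u \<in> {0..t}" for u
  proof -
    have "{j. 1 \<le> j \<and> sel j \<and> u \<le> arr j \<and> arr j \<le> t}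
        = {j. 1 \<le> j \<and> sel j \<and> arr j \<le> t} - {j. 1 \<le> j \<and> sel j \<and> arr j < u}"
      by auto
    moreover have "{j. 1 \<le> j \<and> sel j \<and> arr j < u} \<subseteq> {j. 1 \<le> j \<and> sel j \<and> arr j \<le> t}"
      using that by auto
    ultimately have "(\<Sum>j\<in>{j. 1 \<le> j \<and> sel j \<and> u \<le> arr j \<and> arr j \<le> t}. v j) = A t - F u"
      unfolding arrived_def arrived_before_def by (simp only: sum_diff[OF finite_arrived])
    then show ?thesis by (simp add: algebra_simps)
  qed
  then have "workload r sel arr v t = (SUP u\<in>{0..t}. (A t - r * t) + (r * u - F u))"
    unfolding workload_def by (intro SUP_cong) auto
  also have "\<dots> = A t - r * t + K t"
    unfolding regulator_def using assms by (intro Sup_add_eq bdd_above_netput) auto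
  finally show ?thesis .
qed

text \<open>Between two consecutive arrival epochs the server either stays busy or idles from the
  moment its backlog runs out.\<close>
lemma regulator_between_arrivals:
  assumes "0 \<le> x" "x < t" and quiet: "\<And>u. x < u \<Longrightarrow> u \<le> t \<Longrightarrow> F u = A x"
  shows "K t = max (K x) (r * t - A x)"
proof (rule antisym)
  show "max (K x) (r * t - A x) \<le> K t"
    using regulator_mono[of x t] regulator_upper[of t t] quiet[of t] assms by simp
  show "K t \<le> max (K x) (r * t - A x)"
    unfolding regulator_def[of _ _ _ _ t]
  proof (rule cSUP_least)
    show "{0..t} \<noteq> {}" using assms by simp
    fix u assume u: "u \<in> {0..t}"
    show "r * u - F u \<le> max (K x) (r * t - A x)"
    proof (cases "u \<le> x")
      case True
      then show ?thesis using regulator_upper[of u x] u by simp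
    next
      case False
      then show ?thesis using quiet[of u] u rate_pos by (simp add: le_max_iff_disj)
    qed
  qed
qed

lemma locally_affine_at_regulator:
  assumes "0 \<le> x" "x < t" "t < y"
    and no_arrival: "\<And>j. 1 \<le> j \<Longrightarrow> sel j \<Longrightarrow> arr j \<notin> {x<..<y}"
    and "t \<noteq> (K x + A x) / r"
  shows "locally_affine_at K t"
proof -
  have "F u = A x" if "x < u" "u < y" for u
  proof -
    have "{j. 1 \<le> j \<and> sel j \<and> arr j < u} = {j. 1 \<le> j \<and> sel j \<and> arr j \<le> x}"
      using no_arrival that by force
    then show ?thesis unfolding arrived_def arrived_before_def by simp
  qed
  then have "K t' = max (0 * t' + K x) (r * t' + - A x)" if "x < t'" "t' < y" for t'
    using regulator_between_arrivals[of x t'] that assms(1) by simp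
  then have "\<forall>\<^sub>F t' in nhds t. K t' = max (0 * t' + K x) (r * t' + - A x)"
    using eventually_nhds_in_open[of "{x<..<y}" t] assms(2,3) by (auto elim: eventually_mono)
  moreover have "0 * t + K x \<noteq> r * t + - A x"
    using assms(5) rate_pos by (auto simp: field_simps)
  ultimately show ?thesis
    by (rule locally_affine_at_cong[OF _ locally_affine_at_max])
qed

lemma finite_regulator_kinks: "finite {t \<in> {0<..<T}. \<not> locally_affine_at K t}"
proof -
  define P where "P = arr ` {j. 1 \<le> j \<and> sel j \<and> arr j \<le> T}"
  have "finite P" unfolding P_def using finite_arrived by simp
  have "{t \<in> {0<..<T}. \<not> locally_affine_at K t} \<subseteq> P \<union> (\<lambda>x. (K x + A x) / r) ` insert 0 P"
  proof (rule subsetI, rule ccontr)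
    fix t assume t: "t \<in> {t \<in> {0<..<T}. \<not> locally_affine_at K t}"
      and not_exceptional: "t \<notin> P \<union> (\<lambda>x. (K x + A x) / r) ` insert 0 P"
    define x where "x = Max (insert 0 {a \<in> P. a < t})"
    define y where "y = Min (insert T {a \<in> P. t < a})"
    have x: "0 \<le> x" "x < t" "x \<in> insert 0 P"
      using Max_in[of "insert 0 {a \<in> P. a < t}"] \<open>finite P\<close> t unfolding x_def by auto
    have y: "t < y" "y \<le> T"
      using Min_in[of "insert T {a \<in> P. t < a}"] \<open>finite P\<close> t unfolding y_def by auto
    have "arr j \<notin> {x<..<y}" if "1 \<le> j" "sel j" for j
    proof
      assume between: "arr j \<in> {x<..<y}"
      then have "arr j \<in> P" using that y unfolding P_def by auto
      then have "arr j < t \<Longrightarrow> arr j \<le> x" "t < arr j \<Longrightarrow> y \<le> arr j"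
        using \<open>finite P\<close> unfolding x_def y_def by auto
      then show False using between not_exceptional \<open>arr j \<in> P\<close> by fastforce
    qed
    moreover have "t \<noteq> (K x + A x) / r" using x not_exceptional by blast
    ultimately have "locally_affine_at K t"
      using locally_affine_at_regulator x(1,2) y(1) by blast
    then show False using t by simp
  qed
  then show ?thesis
    by (rule finite_subset) (use \<open>finite P\<close> in simp)
qed

end

lemma regulator_pooled_le_sum:
  assumes "finite I"
    and stations: "\<And>k. k \<in> I \<Longrightarrow> arrival_stream (r k) (\<lambda>j. xi j = k) arr v"
    and pool: "arrival_stream (\<Sum>k\<in>I. r k) (\<lambda>_. True) arr' v"
    and routed: "\<And>j. 1 \<le> j \<Longrightarrow> xi j \<in> I"
    and earlier: "\<And>j. 1 \<le> j \<Longrightarrow> arr' j \<le> arr j"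
    and "0 \<le> t"
  shows "regulator (\<Sum>k\<in>I. r k) (\<lambda>_. True) arr' v t \<le> (\<Sum>k\<in>I. regulator (r k) (\<lambda>j. xi j = k) arr v t)"
  unfolding regulator_def[of "\<Sum>k\<in>I. r k"]
proof (rule cSUP_least)
  show "{0..t} \<noteq> {}" using \<open>0 \<le> t\<close> by simp
  fix u assume u: "u \<in> {0..t}"
  have finite_pool: "finite {j. 1 \<le> j \<and> arr' j < u}"
    using arrival_stream.finite_arrived_before[OF pool] by simp
  have finite_total: "finite {j. 1 \<le> j \<and> arr j < u}"
    by (rule finite_subset[OF _ finite_pool]) (use earlier in \<open>force intro: le_less_trans\<close>)
  have "(\<Sum>k\<in>I. arrived_before (\<lambda>j. xi j = k) arr v u) = (\<Sum>j\<in>{j. 1 \<le> j \<and> arr j < u}. v j)"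
    unfolding arrived_before_def using sum_split_by_class[OF \<open>finite I\<close> finite_total routed] by simp
  also have "\<dots> \<le> arrived_before (\<lambda>_. True) arr' v u"
    unfolding arrived_before_def using finite_pool arrival_stream.v_nonneg[OF pool]
    by (intro sum_mono2) (use earlier in \<open>force intro: le_less_trans\<close>)+
  finally have "(\<Sum>k\<in>I. r k) * u - arrived_before (\<lambda>_. True) arr' v u
      \<le> (\<Sum>k\<in>I. r k * u - arrived_before (\<lambda>j. xi j = k) arr v u)"
    by (simp add: sum_subtractf sum_distrib_right)
  also have "\<dots> \<le> (\<Sum>k\<in>I. regulator (r k) (\<lambda>j. xi j = k) arr v t)"
    using u by (intro sum_mono arrival_stream.regulator_upper[OF stations])
  finally show "(\<Sum>k\<in>I. r k) * u - arrived_before (\<lambda>_. True) arr' v u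
      \<le> (\<Sum>k\<in>I. regulator (r k) (\<lambda>j. xi j = k) arr v t)" .
qed

locale delay_network =
  fixes n s :: nat and lam :: real and mu :: "nat \<Rightarrow> real" and z :: "nat \<Rightarrow> real"
    and d :: "nat \<Rightarrow> nat \<Rightarrow> real" and orig xi :: "nat \<Rightarrow> nat" and v :: "nat \<Rightarrow> real"
  assumes lam_pos: "lam > 0"
    and mu_pos: "\<And>k. k \<in> {1..s} \<Longrightarrow> mu k > 0"
    and delay_nonneg: "\<And>j k. 1 \<le> j \<Longrightarrow> k \<in> {1..s} \<Longrightarrow> d (orig j) k \<ge> 0"
    and appearances_unbounded: "filterlim (\<lambda>j. \<Sum>i\<in>{1..j}. z i) at_top sequentially"
    and routed: "\<And>j. 1 \<le> j \<Longrightarrow> xi j \<in> {1..s}"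
    and v_nonneg: "\<And>j. v j \<ge> 0"
begin

abbreviation "dist_arrival \<equiv> dist_arr n lam z d orig xi"
abbreviation "pool_arrival \<equiv> mdsp_arr n s lam z d orig"
abbreviation "total_rate \<equiv> \<Sum>k\<in>{1..s}. mu k"
abbreviation "appeared_work t \<equiv> \<Sum>j\<in>{j. 1 \<le> j \<and> appear lam z j \<le> t}. v j"

lemma finite_appeared: "finite {j. appear lam z j \<le> t}"
proof -
  obtain N where N: "\<And>j. j \<ge> N \<Longrightarrow> lam * t < (\<Sum>i\<in>{1..j}. z i)"
    using appearances_unbounded unfolding filterlim_at_top_dense eventually_sequentially by blast
  have "appear lam z j > t" if "j \<ge> N" for j
    using N[OF that] lam_pos unfolding appear_def by (simp add: field_simps)
  then have "{j. appear lam z j \<le> t} \<subseteq> {..<N}" by (auto simp: not_le[symmetric])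
  then show ?thesis by (rule finite_subset) simp
qed

lemma appear_le_pool_arrival:
  assumes "1 \<le> j" shows "appear lam z j \<le> pool_arrival j"
proof -
  have "0 \<le> dmin s d (orig j)"
    unfolding dmin_def using routed[OF assms] delay_nonneg[OF assms] by (subst Min_ge_iff) auto
  then show ?thesis unfolding mdsp_arr_def by simp
qed

lemma pool_arrival_le_dist_arrival:
  assumes "1 \<le> j" shows "pool_arrival j \<le> dist_arrival j"
proof -
  have "dmin s d (orig j) \<le> d (orig j) (xi j)"
    unfolding dmin_def using routed[OF assms] by (intro Min_le) auto
  then show ?thesis unfolding mdsp_arr_def dist_arr_def by (simp add: mult_left_mono)
qed

lemma appear_le_dist_arrival: "1 \<le> j \<Longrightarrow> appear lam z j \<le> dist_arrival j"
  using appear_le_pool_arrival pool_arrival_le_dist_arrival by (rule order_trans)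

lemma finite_arrived_after_appearance:
  assumes "\<And>j. 1 \<le> j \<Longrightarrow> appear lam z j \<le> arr j"
  shows "finite {j. 1 \<le> j \<and> sel j \<and> arr j \<le> t}"
  by (rule finite_subset[OF _ finite_appeared[of t]]) (use assms in force)

lemma station_stream:
  assumes "k \<in> {1..s}" shows "arrival_stream (mu k) (\<lambda>j. xi j = k) dist_arrival v"
proof
  show "mu k > 0" using assms by (rule mu_pos)
  show "finite {j. 1 \<le> j \<and> xi j = k \<and> dist_arrival j \<le> t}" for t
    using appear_le_dist_arrival by (rule finite_arrived_after_appearance)
qed (rule v_nonneg)

lemma pool_stream: "arrival_stream total_rate (\<lambda>_. True) pool_arrival v"
proof
  show "total_rate > 0"
    using mu_pos routed[of 1] by (intro sum_pos) auto
  show "finite {j. 1 \<le> j \<and> True \<and> pool_arrival j \<le> t}" for t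
    using appear_le_pool_arrival by (rule finite_arrived_after_appearance)
qed (rule v_nonneg)

lemma dist_total_work:
  assumes "0 \<le> t"
  shows "W_dist n s lam mu z d orig xi v t + U_dist n lam z d orig xi v t
    = appeared_work t - total_rate * t + (\<Sum>k\<in>{1..s}. regulator (mu k) (\<lambda>j. xi j = k) dist_arrival v t)"
proof -
  have "finite {j. 1 \<le> j \<and> dist_arrival j \<le> t}"
    using finite_arrived_after_appearance[of dist_arrival "\<lambda>_. True" t] appear_le_dist_arrival
    by simp
  then have "(\<Sum>k\<in>{1..s}. arrived (\<lambda>j. xi j = k) dist_arrival v t) = arrived (\<lambda>_. True) dist_arrival v t"
    unfolding arrived_def simp_thms by (rule sum_split_by_class[OF finite_atLeastAtMost _ routed])
  moreover have "U_dist n lam z d orig xi v t = appeared_work t - arrived (\<lambda>_. True) dist_arrival v t"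
    unfolding U_dist_def using appear_le_dist_arrival
    by (intro enroute_eq_diff) (auto intro: finite_subset[OF _ finite_appeared])
  ultimately show ?thesis
    unfolding W_dist_def using arrival_stream.workload_eq_regulator[OF station_stream assms]
    by (simp add: sum.distrib sum_subtractf sum_distrib_right)
qed

lemma pool_total_work:
  assumes "0 \<le> t"
  shows "W_mdsp n s lam mu z d orig v t + U_mdsp n s lam z d orig v t
    = appeared_work t - total_rate * t + regulator total_rate (\<lambda>_. True) pool_arrival v t"
proof -
  have "U_mdsp n s lam z d orig v t = appeared_work t - arrived (\<lambda>_. True) pool_arrival v t"
    unfolding U_mdsp_def using appear_le_pool_arrival
    by (intro enroute_eq_diff) (auto intro: finite_subset[OF _ finite_appeared])
  then show ?thesis
    unfolding W_mdsp_def using arrival_stream.workload_eq_regulator[OF pool_stream assms] by simp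
qed

abbreviation "\<Gamma> \<equiv> Gamma n s lam mu z d orig xi v"

lemma Gamma_eq_regulators:
  assumes "0 \<le> t"
  shows "\<Gamma> t = (\<Sum>k\<in>{1..s}. regulator (mu k) (\<lambda>j. xi j = k) dist_arrival v t)
    - regulator total_rate (\<lambda>_. True) pool_arrival v t"
  unfolding Gamma_def dist_total_work[OF assms] pool_total_work[OF assms] by simp

lemma Gamma_nonneg: "0 \<le> t \<Longrightarrow> 0 \<le> \<Gamma> t"
  using regulator_pooled_le_sum[OF _ station_stream pool_stream routed pool_arrival_le_dist_arrival]
  by (simp add: Gamma_eq_regulators)

lemma continuous_on_Gamma: "continuous_on {0..} \<Gamma>"
proof -
  have "continuous_on {0..} (\<lambda>t. (\<Sum>k\<in>{1..s}. regulator (mu k) (\<lambda>j. xi j = k) dist_arrival v t)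
      - regulator total_rate (\<lambda>_. True) pool_arrival v t)"
    by (intro continuous_intros arrival_stream.continuous_on_regulator station_stream pool_stream)
  then show ?thesis by (rule continuous_on_cong[THEN iffD1, OF refl, rotated]) (simp add: Gamma_eq_regulators)
qed

lemma finite_Gamma_kinks: "finite {t \<in> {0<..<T}. \<not> locally_affine_at \<Gamma> t}"
proof -
  let ?kinks = "\<lambda>f. {t \<in> {0<..<T}. \<not> locally_affine_at f t}"
  have "?kinks \<Gamma> \<subseteq> (\<Union>k\<in>{1..s}. ?kinks (regulator (mu k) (\<lambda>j. xi j = k) dist_arrival v))
      \<union> ?kinks (regulator total_rate (\<lambda>_. True) pool_arrival v)"
  proof (rule subsetI, rule ccontr)
    fix t assume t: "t \<in> ?kinks \<Gamma>" and
      "t \<notin> (\<Union>k\<in>{1..s}. ?kinks (regulator (mu k) (\<lambda>j. xi j = k) dist_arrival v))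
        \<union> ?kinks (regulator total_rate (\<lambda>_. True) pool_arrival v)"
    then have "locally_affine_at (\<lambda>t. (\<Sum>k\<in>{1..s}. regulator (mu k) (\<lambda>j. xi j = k) dist_arrival v t)
      - regulator total_rate (\<lambda>_. True) pool_arrival v t) t"
      by (auto intro!: locally_affine_at_diff locally_affine_at_sum)
    moreover have "\<forall>\<^sub>F t' in nhds t. \<Gamma> t' = (\<Sum>k\<in>{1..s}. regulator (mu k) (\<lambda>j. xi j = k) dist_arrival v t')
      - regulator total_rate (\<lambda>_. True) pool_arrival v t'"
      using eventually_nhds_in_open[of "{0<..}" t] t by (auto elim: eventually_mono simp: Gamma_eq_regulators)
    ultimately have "locally_affine_at \<Gamma> t" by (rule locally_affine_at_cong[rotated])
    then show False using t by simp
  qed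
  then show ?thesis
    by (rule finite_subset) (blast intro: finite_UnI finite_UN_I finite_atLeastAtMost
      arrival_stream.finite_regulator_kinks station_stream pool_stream)
qed

end

theorem proposition4:
  fixes n s b :: nat and lam :: real and mu :: "nat \<Rightarrow> real"
    and d :: "nat \<Rightarrow> nat \<Rightarrow> real" and z v :: "nat \<Rightarrow> real"
    and orig xi :: "nat \<Rightarrow> nat"
  assumes "n \<ge> 1" and "s \<ge> 2" and "b \<ge> 1" and "lam > 0"
    and "\<And>k. k \<in> {1..s} \<Longrightarrow> mu k > 0"
    and "\<And>k. k \<in> {1..<s} \<Longrightarrow> mu k \<le> mu (Suc k)"
    and "\<And>m k. m \<in> {1..b} \<Longrightarrow> k \<in> {1..s} \<Longrightarrow> d m k \<ge> 0"
    and "\<And>i. z i \<ge> 0"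
    and "filterlim (\<lambda>j. \<Sum>i\<in>{1..j}. z i) at_top sequentially"
    and "\<And>j. j \<ge> 1 \<Longrightarrow> orig j \<in> {1..b}"
    and "\<And>j. j \<ge> 1 \<Longrightarrow> xi j \<in> {1..s}"
    and "\<And>j. v j \<ge> 0"
  shows "continuous_on {0..} (Gamma n s lam mu z d orig xi v)
    \<and> piecewise_linear_nonneg (Gamma n s lam mu z d orig xi v)
    \<and> (\<forall>t\<ge>0. Gamma n s lam mu z d orig xi v t \<ge> 0)"
proof -
  interpret delay_network n s lam mu z d orig xi v
    using assms by unfold_locales auto
  show ?thesis
    using continuous_on_Gamma finite_Gamma_kinks Gamma_nonneg
    by (auto intro: piecewise_linear_nonnegI)
qed

end
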